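(* Let $r\ge 3$ and $n\ge\frac{(r-1)(2r+1)}{2}$, and let $\mathcal{H}$ be an $n$-vertex $r$-graph with $\delta_{r-1}^{+}(\mathcal{H})>\frac{2n}{2r+1}$. Let $V_1,\ldots,V_r\subseteq V(\mathcal{H})$ be pairwise disjoint sets, each independent in $\mathcal{H}$, with $|V_i|>\frac{2n}{2r+1}$ for all $i\in[r]$, and let $Z=V(\mathcal{H})\setminus(V_1\cup\cdots\cup V_r)$. Let $v\in Z$ and let $v_1\in V_1\cap N_{\mathcal{H}}(v)$. Then there exists an edge $e\in\mathcal{H}$ with $\{v,v_1\}\subseteq e$ and $|e\cap(V_2\cup\cdots\cup V_r)|\ge r-2$.
   Context: An $r$-graph $\mathcal{H}$ is a collection of $r$-subsets (edges) of a finite vertex set $V(\mathcal{H})$. The shadow is $\partial\mathcal{H}=\{e\in\binom{V(\mathcal{H})}{r-1}\colon e\subseteq E \text{ for some } E\in\mathcal{H}\}$. For $e\in\partial\mathcal{H}$, $N_{\mathcal{H}}(e)=\{u\in V(\mathcal{H})\colon e\cup\{u\}\in\mathcal{H}\}$. For a vertex $v$, $N_{\mathcal{H}}(v)=\{u\in V(\mathcal{H})\setminus\{v\}\colon \{u,v\}\subseteq E\text{ for some } E\in\mathcal{H}\}$. The minimum positive codegree is $\delta_{r-1}^{+}(\mathcal{H})=\min\{|N_{\mathcal{H}}(e)|\colon e\in\partial\mathcal{H}\}$. A set $I\subseteq V(\mathcal{H})$ is independent in $\mathcal{H}$ if every edge contains at most one vertex of $I$. *)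

theory Defs
  imports Main "HOL-Library.Extended_Nat"
begin

definition r_graph :: "'a set \<Rightarrow> 'a set set \<Rightarrow> nat \<Rightarrow> bool" where
  "r_graph V H r \<longleftrightarrow> finite V \<and> (\<forall>E\<in>H. E \<subseteq> V \<and> card E = r)"

definition shadow :: "'a set \<Rightarrow> 'a set set \<Rightarrow> nat \<Rightarrow> 'a set set" where
  "shadow V H r = {e. e \<subseteq> V \<and> card e = r - 1 \<and> (\<exists>E\<in>H. e \<subseteq> E)}"

definition nbhd_set :: "'a set \<Rightarrow> 'a set set \<Rightarrow> 'a set \<Rightarrow> 'a set" where
  "nbhd_set V H e = {u\<in>V. e \<union> {u} \<in> H}"

definition nbhd_vertex :: "'a set \<Rightarrow> 'a set set \<Rightarrow> 'a \<Rightarrow> 'a set" where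
  "nbhd_vertex V H v = {u\<in>V - {v}. \<exists>E\<in>H. {u, v} \<subseteq> E}"

text \<open>Minimum positive codegree (as an extended natural; infinity if the shadow is empty).\<close>
definition min_pos_codegree :: "'a set \<Rightarrow> 'a set set \<Rightarrow> nat \<Rightarrow> enat" where
  "min_pos_codegree V H r = (INF e\<in>shadow V H r. enat (card (nbhd_set V H e)))"

definition independent :: "'a set set \<Rightarrow> 'a set \<Rightarrow> bool" where
  "independent H I \<longleftrightarrow> (\<forall>E\<in>H. card (E \<inter> I) \<le> 1)"

end

theory Submission
  imports Defs
begin

text \<open>Take an edge \<open>e \<supseteq> {v, v\<^sub>1}\<close> with as many vertices in \<open>V\<^sub>2 \<union> \<dots> \<union> V\<^sub>r\<close> as possible.
  If that number were below \<open>r - 2\<close>, then \<open>e\<close> would contain a vertex \<open>w\<close> of \<open>Z\<close> other than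
  \<open>v\<close>. Every neighbour \<open>u\<close> of the shadow set \<open>e - {w}\<close> lies in \<open>Z\<close>: it cannot lie in a part
  already met by \<open>e - {w}\<close> (independence), and if it lay in a part \<open>V\<^sub>i\<close> missed by \<open>e\<close>, then
  \<open>i \<ge> 2\<close> and the edge \<open>(e - {w}) \<union> {u}\<close> would contradict the maximality of \<open>e\<close>. So
  \<open>N(e - {w})\<close>, \<open>V\<^sub>1\<close>, \<dots>, \<open>V\<^sub>r\<close> are \<open>r + 1\<close> disjoint sets of size \<open>> 2n/(2r+1)\<close> each,
  which is impossible.\<close>

lemma r_graph_edge_finite: "r_graph V H r \<Longrightarrow> E \<in> H \<Longrightarrow> finite E"
  unfolding r_graph_def using finite_subset by blast

lemma independent_eqI:
  assumes "independent H I" "E \<in> H" "finite E"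
    and "x \<in> E" "y \<in> E" "x \<in> I" "y \<in> I"
  shows "x = y"
proof (rule ccontr)
  assume "x \<noteq> y"
  then have "card {x, y} \<le> card (E \<inter> I)"
    using assms by (intro card_mono) auto
  moreover have "card (E \<inter> I) \<le> 1"
    using assms(1,2) unfolding independent_def by blast
  ultimately show False
    using \<open>x \<noteq> y\<close> by simp
qed

lemma remove_vertex_in_shadow:
  assumes "r_graph V H r" "E \<in> H" "w \<in> E"
  shows "E - {w} \<in> shadow V H r"
  using assms r_graph_edge_finite[OF assms(1,2)]
  unfolding shadow_def r_graph_def by auto

lemma less_mult_card_nbhd_set:
  assumes "enat a < enat c * min_pos_codegree V H r" "f \<in> shadow V H r"
  shows "a < c * card (nbhd_set V H f)"
proof -
  have "min_pos_codegree V H r \<le> enat (card (nbhd_set V H f))"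
    unfolding min_pos_codegree_def using assms(2) by (rule INF_lower)
  then have "enat c * min_pos_codegree V H r \<le> enat (c * card (nbhd_set V H f))"
    by (metis mult_left_mono times_enat_simps(1) zero_le)
  then show ?thesis
    using assms(1) by (metis enat_ord_simps(2) order_less_le_trans)
qed

lemma nbhd_set_remove_vertex_not_mem:
  assumes "r_graph V H r" "E \<in> H" "w \<in> E" "u \<in> nbhd_set V H (E - {w})"
  shows "u \<notin> E - {w}"
proof
  assume "u \<in> E - {w}"
  then have "E - {w} \<in> H"
    using assms(4) unfolding nbhd_set_def by (simp add: insert_absorb)
  then have "card (E - {w}) = card E"
    using assms(1,2) unfolding r_graph_def by simp
  then show False
    using assms(3) r_graph_edge_finite[OF assms(1,2)] card_Diff1_less by fastforce
qed

text \<open>Otherwise the edge \<open>(E - {w}) \<union> {u}\<close> would meet \<open>I\<close> twice.\<close>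

lemma nbhd_set_remove_vertex_in_independent:
  assumes "r_graph V H r" "independent H I" "E \<in> H" "w \<in> E" "w \<notin> I"
    and "u \<in> nbhd_set V H (E - {w})" "u \<in> I"
  shows "E \<inter> I = {}"
proof (rule ccontr)
  assume "E \<inter> I \<noteq> {}"
  then obtain x where x: "x \<in> E - {w}" "x \<in> I"
    using assms(5) by auto
  have edge: "E - {w} \<union> {u} \<in> H"
    using assms(6) unfolding nbhd_set_def by simp
  have "x = u"
    using independent_eqI[OF assms(2) edge] r_graph_edge_finite[OF assms(1) edge] x assms(7)
    by blast
  then show False
    using nbhd_set_remove_vertex_not_mem[OF assms(1,3,4,6)] x(1) by simp
qed

lemma nbhd_set_remove_vertex_disjoint_parts:
  assumes "r_graph V H r" "\<forall>i\<in>I. independent H (Vs i)"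
    and "E \<in> H" "w \<in> E" "w \<notin> (\<Union>i\<in>I. Vs i)" "J \<subseteq> I"
    and "\<forall>i\<in>I - J. E \<inter> Vs i \<noteq> {}"
    and maximal: "\<forall>E'\<in>H. E - {w} \<subseteq> E' \<longrightarrow>
        card (E' \<inter> (\<Union>j\<in>J. Vs j)) \<le> card (E \<inter> (\<Union>j\<in>J. Vs j))"
    and "i \<in> I"
  shows "nbhd_set V H (E - {w}) \<inter> Vs i = {}"
proof (rule ccontr)
  define U where "U = (\<Union>j\<in>J. Vs j)"
  assume "nbhd_set V H (E - {w}) \<inter> Vs i \<noteq> {}"
  then obtain u where u: "u \<in> nbhd_set V H (E - {w})" "u \<in> Vs i"
    by auto
  have "E \<inter> Vs i = {}"
    using nbhd_set_remove_vertex_in_independent[OF assms(1) _ assms(3,4) _ u] assms(2,5,9)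
    by blast
  then have "u \<in> U"
    using assms(7,9) u(2) unfolding U_def by blast
  moreover have "w \<notin> U" "u \<notin> E"
    using assms(5,6,9) u nbhd_set_remove_vertex_not_mem[OF assms(1,3,4) u(1)]
    unfolding U_def by auto
  ultimately have "(E - {w} \<union> {u}) \<inter> U = insert u (E \<inter> U)" "u \<notin> E \<inter> U"
    by auto
  then have "card ((E - {w} \<union> {u}) \<inter> U) = Suc (card (E \<inter> U))"
    using r_graph_edge_finite[OF assms(1,3)] by simp
  moreover have "E - {w} \<union> {u} \<in> H"
    using u(1) unfolding nbhd_set_def by simp
  then have "card ((E - {w} \<union> {u}) \<inter> U) \<le> card (E \<inter> U)"
    using maximal unfolding U_def by blast
  ultimately show False
    by simp
qed

lemma card_disjoint_family_le:
  assumes "finite V" "A \<subseteq> V" "finite I" "\<forall>i\<in>I. Vs i \<subseteq> V"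
    and "\<forall>i\<in>I. \<forall>j\<in>I. i \<noteq> j \<longrightarrow> Vs i \<inter> Vs j = {}"
    and "\<forall>i\<in>I. A \<inter> Vs i = {}"
  shows "card A + (\<Sum>i\<in>I. card (Vs i)) \<le> card V"
proof -
  have fin: "\<forall>i\<in>I. finite (Vs i)"
    using assms(1,4) finite_subset by blast
  have "card A + (\<Sum>i\<in>I. card (Vs i)) = card (A \<union> (\<Union>i\<in>I. Vs i))"
    using assms(1-3,5,6) fin
    by (simp add: card_UN_disjoint card_Un_disjoint finite_subset Int_UN_distrib)
  also have "\<dots> \<le> card V"
    using assms(1,2,4) by (intro card_mono) auto
  finally show ?thesis .
qed

lemma disjoint_large_subsets_bound:
  fixes b c :: nat
  assumes "finite V" "A \<subseteq> V" "finite I" "\<forall>i\<in>I. Vs i \<subseteq> V"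
    and "\<forall>i\<in>I. \<forall>j\<in>I. i \<noteq> j \<longrightarrow> Vs i \<inter> Vs j = {}"
    and "\<forall>i\<in>I. A \<inter> Vs i = {}"
    and "b * card V < c * card A" "\<forall>i\<in>I. b * card V < c * card (Vs i)"
  shows "b * (card I + 1) < c"
proof -
  have "card I * (b * card V) \<le> c * (\<Sum>i\<in>I. card (Vs i))"
    using sum_mono[of I "\<lambda>_. b * card V" "\<lambda>i. c * card (Vs i)"] assms(8)
    by (simp add: sum_distrib_left less_imp_le)
  then have "b * (card I + 1) * card V < c * (card A + (\<Sum>i\<in>I. card (Vs i)))"
    using assms(7) by (simp add: algebra_simps)
  also have "\<dots> \<le> c * card V"
    using card_disjoint_family_le[OF assms(1-6)] by simp
  finally show ?thesis
    by simp
qed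

lemma exists_mem_outside_of_card_less:
  assumes "finite E" "finite A" "card (E \<inter> U) + card A < card E"
  obtains w where "w \<in> E" "w \<notin> A" "w \<notin> U"
proof -
  have "\<not> E \<subseteq> (E \<inter> U) \<union> A"
  proof
    assume "E \<subseteq> (E \<inter> U) \<union> A"
    then have "card E \<le> card ((E \<inter> U) \<union> A)"
      using assms(1,2) by (intro card_mono) auto
    also have "\<dots> \<le> card (E \<inter> U) + card A"
      by (rule card_Un_le)
    finally show False
      using assms(3) by simp
  qed
  then show ?thesis
    using that by blast
qed

lemma exists_edge_through_pair_maximal:
  assumes "r_graph V H r" "v1 \<in> nbhd_vertex V H v"
  obtains E where "E \<in> H" "{v, v1} \<subseteq> E"
    "\<forall>E'\<in>H. {v, v1} \<subseteq> E' \<longrightarrow> card (E' \<inter> U) \<le> card (E \<inter> U)"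
proof -
  obtain E0 where "E0 \<in> H" "{v, v1} \<subseteq> E0"
    using assms(2) unfolding nbhd_vertex_def by auto
  moreover have "card (E \<inter> U) < Suc r" if "E \<in> H" for E
    using card_mono[OF r_graph_edge_finite[OF assms(1) that] Int_lower1[of E U]] assms(1) that
    unfolding r_graph_def by simp
  ultimately obtain E where "E \<in> H \<and> {v, v1} \<subseteq> E"
    "\<forall>E'. E' \<in> H \<and> {v, v1} \<subseteq> E' \<longrightarrow> card (E' \<inter> U) \<le> card (E \<inter> U)"
    using ex_has_greatest_nat[of "\<lambda>E. E \<in> H \<and> {v, v1} \<subseteq> E" E0 "\<lambda>E. card (E \<inter> U)" "Suc r"]
    by blast
  then show ?thesis
    using that by blast
qed

theorem claim2p6:
  fixes V :: "'a set" and H :: "'a set set" and r n :: nat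
    and Vs :: "nat \<Rightarrow> 'a set" and v v1 :: 'a
  assumes "r \<ge> 3"
    and "r_graph V H r"
    and "n = card V"
    and "2 * n \<ge> (r - 1) * (2 * r + 1)"
    and "enat (2 * n) < enat (2 * r + 1) * min_pos_codegree V H r"
    and "\<forall>i\<in>{1..r}. Vs i \<subseteq> V \<and> independent H (Vs i) \<and> (2 * n) < (2 * r + 1) * card (Vs i)"
    and "\<forall>i\<in>{1..r}. \<forall>j\<in>{1..r}. i \<noteq> j \<longrightarrow> Vs i \<inter> Vs j = {}"
    and "v \<in> V - (\<Union>i\<in>{1..r}. Vs i)"
    and "v1 \<in> Vs 1 \<inter> nbhd_vertex V H v"
  shows "\<exists>e\<in>H. {v, v1} \<subseteq> e \<and> card (e \<inter> (\<Union>i\<in>{2..r}. Vs i)) \<ge> r - 2"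
proof (rule ccontr)
  define U where "U = (\<Union>i\<in>{2..r}. Vs i)"
  assume "\<not> ?thesis"
  then have few: "\<forall>E\<in>H. {v, v1} \<subseteq> E \<longrightarrow> card (E \<inter> U) < r - 2"
    unfolding U_def by (simp add: not_le)
  obtain E where E: "E \<in> H" "{v, v1} \<subseteq> E"
    and maximal: "\<forall>E'\<in>H. {v, v1} \<subseteq> E' \<longrightarrow> card (E' \<inter> U) \<le> card (E \<inter> U)"
    using exists_edge_through_pair_maximal[OF assms(2), where U = U] assms(9) by blast
  have finE: "finite E"
    using r_graph_edge_finite[OF assms(2) E(1)] .
  have "card {v, v1} \<le> 2" "card E = r"
    using assms(2) E(1) unfolding r_graph_def by (auto simp: card_insert_if)
  then have "card (E \<inter> U) + card {v, v1} < card E"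
    using few[rule_format, OF E] by linarith
  then obtain w where w: "w \<in> E" "w \<notin> {v, v1}" "w \<notin> U"
    using exists_mem_outside_of_card_less[OF finE finite.insertI[OF finite.insertI[OF finite.emptyI]]]
    by blast
  have indep: "\<forall>i\<in>{1..r}. independent H (Vs i)"
    using assms(6) by simp
  then have "independent H (Vs 1)"
    using assms(1) by simp
  then have "w \<notin> Vs 1"
    using independent_eqI[OF _ E(1) finE w(1), of "Vs 1" v1] E(2) w(2) assms(9) by auto
  moreover have parts: "{1..r} = insert 1 {2..r}"
    using assms(1) by auto
  ultimately have w_outside: "w \<notin> (\<Union>i\<in>{1..r}. Vs i)"
    using w(3) unfolding U_def by simp
  have meets: "\<forall>i\<in>{1..r} - {2..r}. E \<inter> Vs i \<noteq> {}"
    using E(2) assms(9) unfolding parts by auto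
  have "\<forall>E'\<in>H. E - {w} \<subseteq> E' \<longrightarrow> card (E' \<inter> U) \<le> card (E \<inter> U)"
    using maximal E(2) w(2) by blast
  then have avoids: "nbhd_set V H (E - {w}) \<inter> Vs i = {}" if "i \<in> {1..r}" for i
    using nbhd_set_remove_vertex_disjoint_parts[OF assms(2) indep E(1) w(1) w_outside _ meets _ that]
    unfolding U_def by auto
  have "2 * n < (2 * r + 1) * card (nbhd_set V H (E - {w}))"
    using less_mult_card_nbhd_set[OF assms(5) remove_vertex_in_shadow[OF assms(2) E(1) w(1)]] .
  then have "2 * (card {1..r} + 1) < 2 * r + 1"
    using disjoint_large_subsets_bound[of V "nbhd_set V H (E - {w})" "{1..r}" Vs 2 "2 * r + 1"]
      avoids assms(2,3,6,7) unfolding r_graph_def nbhd_set_def by auto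
  then show False
    by simp
qed

end
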